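(* Let $f : X \to \mathbb{R}$ be arbitrary, and suppose there exist $r \in \mathbb{R}$ and a Cantor set $C \subseteq X$ such that, in the subspace topology of $C$, the set $C \cap \{f \ge r\}$ is meagre and dense in $C$. Then Player I has a winning strategy in $\Gamma(f)$.
   Context: Let $A$ be a non-empty countable set and $T$ a pruned tree on $A$ (a set of finite sequences of elements of $A$, closed under initial segments, in which every sequence has a proper extension in $T$). Let $X$ be the set of infinite branches of $T$, with the topology generated by the cylinder sets $O(s) = \{x \in X : s \text{ is an initial segment of } x\}$, $s \in T$. A Cantor set is a subset homeomorphic to the middle-thirds Cantor set. $\{f \ge r\} = \{x \in X : f(x) \ge r\}$. The game $\Gamma(f)$: Player I and Player II alternate, Player I moving first; Player I plays $x_0, x_1, \dots \in A$ subject to $(x_0,\dots,x_t) \in T$ for all $t$, and after each move $x_t$ Player II plays a real number $v_t$. Player II wins the run iff $f(x_0,x_1,\dots) = \limsup_{t\to\infty} v_t$; otherwise Player I wins. *)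

theory Defs
  imports "HOL-Analysis.Analysis" "HOL-Library.Extended_Real"
begin

definition is_tree_on :: "'a set \<Rightarrow> 'a list set \<Rightarrow> bool" where
  "is_tree_on A T \<longleftrightarrow> T \<subseteq> lists A \<and> (\<forall>s\<in>T. \<forall>n. take n s \<in> T)"

definition pruned :: "'a list set \<Rightarrow> bool" where
  "pruned T \<longleftrightarrow> (\<forall>s\<in>T. \<exists>t\<in>T. length s < length t \<and> take (length s) t = s)"

definition branches :: "'a list set \<Rightarrow> (nat \<Rightarrow> 'a) set" where
  "branches T = {x. \<forall>n. map x [0..<n] \<in> T}"

definition cylinder :: "'a list set \<Rightarrow> 'a list \<Rightarrow> (nat \<Rightarrow> 'a) set" where
  "cylinder T s = {x \<in> branches T. map x [0..<length s] = s}"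

definition branch_topology :: "'a list set \<Rightarrow> (nat \<Rightarrow> 'a) topology" where
  "branch_topology T = topology_generated_by (cylinder T ` T)"

fun cantor_level :: "nat \<Rightarrow> real set" where
  "cantor_level 0 = {0..1}"
| "cantor_level (Suc n) = (\<lambda>x. x / 3) ` cantor_level n \<union> (\<lambda>x. x / 3 + 2 / 3) ` cantor_level n"

definition middle_thirds_cantor :: "real set" where
  "middle_thirds_cantor = (\<Inter>n. cantor_level n)"

definition is_cantor_set :: "'b topology \<Rightarrow> 'b set \<Rightarrow> bool" where
  "is_cantor_set X C \<longleftrightarrow> C \<subseteq> topspace X \<and>
     (subtopology X C) homeomorphic_space (top_of_set middle_thirds_cantor)"

definition nowhere_dense_in :: "'b topology \<Rightarrow> 'b set \<Rightarrow> bool" where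
  "nowhere_dense_in X S \<longleftrightarrow> S \<subseteq> topspace X \<and> X interior_of (X closure_of S) = {}"

definition meagre_in :: "'b topology \<Rightarrow> 'b set \<Rightarrow> bool" where
  "meagre_in X S \<longleftrightarrow> S \<subseteq> topspace X \<and>
     (\<exists>F :: nat \<Rightarrow> 'b set. (\<forall>n. nowhere_dense_in X (F n)) \<and> S \<subseteq> (\<Union>n. F n))"

definition dense_in :: "'b topology \<Rightarrow> 'b set \<Rightarrow> bool" where
  "dense_in X S \<longleftrightarrow> S \<subseteq> topspace X \<and> X closure_of S = topspace X"

text \<open>A strategy for Player I maps the history
  (I's moves x_0..x_{t-1}, II's moves v_0..v_{t-1}) to I's next move x_t.
  playI sigma v n is the list of I's first n moves when II plays v.\<close>
fun playI :: "('a list \<Rightarrow> real list \<Rightarrow> 'a) \<Rightarrow> (nat \<Rightarrow> real) \<Rightarrow> nat \<Rightarrow> 'a list" where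
  "playI \<sigma> v 0 = []"
| "playI \<sigma> v (Suc n) = playI \<sigma> v n @ [\<sigma> (playI \<sigma> v n) (map v [0..<n])]"

definition runI :: "('a list \<Rightarrow> real list \<Rightarrow> 'a) \<Rightarrow> (nat \<Rightarrow> real) \<Rightarrow> nat \<Rightarrow> 'a" where
  "runI \<sigma> v t = playI \<sigma> v (Suc t) ! t"

text \<open>sigma is winning for Player I: against every sequence of moves of Player II
  (every strategy of II produces such a sequence, and every sequence is produced
  by some strategy) all of I's moves are legal and f(x) differs from limsup v_t
  (the limsup taken in the extended reals).\<close>
definition winning_strategy_I ::
  "'a list set \<Rightarrow> ((nat \<Rightarrow> 'a) \<Rightarrow> real) \<Rightarrow> ('a list \<Rightarrow> real list \<Rightarrow> 'a) \<Rightarrow> bool" where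
  "winning_strategy_I T f \<sigma> \<longleftrightarrow>
     (\<forall>v :: nat \<Rightarrow> real. (\<forall>n. playI \<sigma> v n \<in> T) \<and>
        ereal (f (runI \<sigma> v)) \<noteq> limsup (\<lambda>t. ereal (v t)))"

end

theory Submission
  imports Defs
begin

text \<open>Write \<open>D = C \<inter> {f \<ge> r}\<close>, a dense subset of \<open>C\<close> covered by nowhere dense sets
  \<open>F\<^sub>0, F\<^sub>1, \<dots>\<close>. Player I keeps a target \<open>d \<in> D\<close> and plays it coordinate by coordinate.
  Whenever Player II bids above \<open>r - 1/(k+1)\<close>, where \<open>k\<close> counts the switches made so far,
  Player I switches to a new target in \<open>D\<close> that agrees with the old one on everything already
  played or locked, and locks a prefix all of whose extensions in \<open>C\<close> avoid \<open>F\<^sub>k\<close>.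
  After finitely many switches the run is a point of \<open>D\<close>, so \<open>f \<ge> r\<close> while the limsup of
  the bids is below \<open>r\<close>. After infinitely many switches the limsup is at least \<open>r\<close>, while the
  run lies in the closed set \<open>C\<close> and avoids every \<open>F\<^sub>k\<close>, hence lies outside \<open>D\<close>, so \<open>f < r\<close>.\<close>

lemma compact_cantor_level: "compact (cantor_level n)"
proof (induction n)
  case (Suc n)
  have "compact ((\<lambda>x. x / 3) ` cantor_level n)" "compact ((\<lambda>x. x / 3 + 2/3) ` cantor_level n)"
    by (intro compact_continuous_image continuous_intros Suc; simp)+
  then show ?case by (simp add: compact_Un)
qed simp

lemma compact_middle_thirds_cantor: "compact middle_thirds_cantor"
  unfolding middle_thirds_cantor_def by (rule compact_Inter) (auto simp: compact_cantor_level)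

lemma middle_thirds_cantor_nonempty: "middle_thirds_cantor \<noteq> {}"
proof -
  have "(0::real) \<in> cantor_level n" for n
    by (induction n) (auto intro: image_eqI[where x=0])
  then show ?thesis unfolding middle_thirds_cantor_def by blast
qed

lemma branch_prefix_in_tree: "x \<in> branches T \<Longrightarrow> map x [0..<n] \<in> T"
  unfolding branches_def by auto

lemma cylinder_prefix: "cylinder T (map x [0..<n]) = {z \<in> branches T. \<forall>i<n. z i = x i}"
  unfolding cylinder_def by (auto simp: map_eq_conv)

lemma openin_cylinder_prefix:
  "x \<in> branches T \<Longrightarrow> openin (branch_topology T) (cylinder T (map x [0..<n]))"
  unfolding branch_topology_def by (rule topology_generated_by_Basis) (auto simp: branch_prefix_in_tree)

lemma topspace_branch_topology: "topspace (branch_topology T) = branches T"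
proof
  show "topspace (branch_topology T) \<subseteq> branches T"
    unfolding branch_topology_def by (auto simp: cylinder_def)
  show "branches T \<subseteq> topspace (branch_topology T)"
  proof
    fix x assume x: "x \<in> branches T"
    then have "x \<in> cylinder T (map x [0..<0])" by (simp add: cylinder_def)
    then show "x \<in> topspace (branch_topology T)"
      using openin_subset[OF openin_cylinder_prefix[OF x]] by blast
  qed
qed

lemma openin_branch_topology_prefix_nbhd:
  assumes "openin (branch_topology T) U" "x \<in> U"
  shows "\<exists>n. \<forall>z\<in>branches T. (\<forall>i<n. z i = x i) \<longrightarrow> z \<in> U"
proof -
  have "generate_topology_on (cylinder T ` T) U"
    using assms(1) by (simp add: branch_topology_def openin_topology_generated_by_iff)
  then show ?thesis using assms(2)
  proof (induction arbitrary: x rule: generate_topology_on.induct)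
    case (Int a b)
    then obtain n1 n2 where "\<forall>z\<in>branches T. (\<forall>i<n1. z i = x i) \<longrightarrow> z \<in> a"
      "\<forall>z\<in>branches T. (\<forall>i<n2. z i = x i) \<longrightarrow> z \<in> b" by blast
    then show ?case by (intro exI[of _ "max n1 n2"]) auto
  next
    case (UN K)
    then obtain k where "k \<in> K" "x \<in> k" by blast
    with UN.IH obtain n where "\<forall>z\<in>branches T. (\<forall>i<n. z i = x i) \<longrightarrow> z \<in> k" by blast
    with \<open>k \<in> K\<close> show ?case by blast
  next
    case (Basis s)
    then obtain t where "s = cylinder T t" "map x [0..<length t] = t"
      by (auto simp: cylinder_def)
    then have "s = cylinder T (map x [0..<length t])" by simp
    then show ?case by (intro exI[of _ "length t"]) (simp add: cylinder_prefix)
  qed simp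
qed

lemma Hausdorff_space_branch_topology: "Hausdorff_space (branch_topology T)"
  unfolding Hausdorff_space_def topspace_branch_topology
proof (intro allI impI)
  fix x y assume xy: "x \<in> branches T \<and> y \<in> branches T \<and> x \<noteq> y"
  then obtain i where "x i \<noteq> y i" by blast
  then have "disjnt (cylinder T (map x [0..<Suc i])) (cylinder T (map y [0..<Suc i]))"
    unfolding cylinder_prefix disjnt_def by auto
  moreover have "x \<in> cylinder T (map x [0..<Suc i])" "y \<in> cylinder T (map y [0..<Suc i])"
    using xy unfolding cylinder_prefix by auto
  ultimately show "\<exists>U V. openin (branch_topology T) U \<and> openin (branch_topology T) V \<and>
      x \<in> U \<and> y \<in> V \<and> disjnt U V"
    using xy openin_cylinder_prefix by metis
qed

lemma in_closure_of_branch_topology: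
  assumes "C \<subseteq> branches T" "x \<in> branches T" "\<And>n. \<exists>y\<in>C. \<forall>i<n. y i = x i"
  shows "x \<in> branch_topology T closure_of C"
  unfolding in_closure_of topspace_branch_topology
proof (intro conjI allI impI)
  fix U assume "x \<in> U \<and> openin (branch_topology T) U"
  then obtain n where "\<forall>z\<in>branches T. (\<forall>i<n. z i = x i) \<longrightarrow> z \<in> U"
    using openin_branch_topology_prefix_nbhd by metis
  with assms show "\<exists>y. y \<in> C \<and> y \<in> U" by blast
qed (fact assms(2))

lemma cantor_set_nonempty:
  assumes "is_cantor_set X C"
  shows "C \<noteq> {}"
proof
  assume "C = {}"
  then have "subtopology X C = trivial_topology"
    by (simp add: null_topspace_iff_trivial[symmetric])
  then have "top_of_set middle_thirds_cantor = trivial_topology"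
    using assms homeomorphic_empty_space unfolding is_cantor_set_def by blast
  then have "middle_thirds_cantor = {}"
    by (metis null_topspace_iff_trivial topspace_euclidean_subtopology)
  with middle_thirds_cantor_nonempty show False ..
qed

lemma cantor_set_closedin_branch_topology:
  assumes "is_cantor_set (branch_topology T) C"
  shows "closedin (branch_topology T) C"
proof -
  have "compact_space (top_of_set middle_thirds_cantor)"
    using compact_middle_thirds_cantor by (simp add: compact_space_subtopology)
  then have "compact_space (subtopology (branch_topology T) C)"
    using assms homeomorphic_compact_space unfolding is_cantor_set_def by blast
  then have "compactin (branch_topology T) C"
    using assms compactin_subspace unfolding is_cantor_set_def by blast
  then show ?thesis
    using Hausdorff_space_branch_topology compactin_imp_closedin by blast
qed

lemma dense_extension_avoiding_nowhere_dense:
  fixes T :: "'a list set" and C :: "(nat \<Rightarrow> 'a) set"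
  defines "S \<equiv> subtopology (branch_topology T) C"
  assumes C: "C \<subseteq> branches T" and F: "nowhere_dense_in S F" and D: "dense_in S D"
    and d: "d \<in> C"
  shows "\<exists>d' L. d' \<in> D \<and> m \<le> L \<and> (\<forall>i<m. d' i = d i) \<and>
    (\<forall>z\<in>C. (\<forall>i<L. z i = d' i) \<longrightarrow> z \<notin> F)"
proof -
  have topS: "topspace S = C"
    using C unfolding S_def by (simp add: topspace_branch_topology Int_absorb1)
  have open_S: "openin S (C \<inter> cylinder T (map x [0..<n]))" if "x \<in> C" for x n
    unfolding S_def using that C by (intro openin_subtopology_Int2 openin_cylinder_prefix) blast
  have "S interior_of (S closure_of F) = {}"
    using F by (simp add: nowhere_dense_in_def)
  moreover have "d \<in> C \<inter> cylinder T (map d [0..<m])"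
    using d C by (auto simp: cylinder_prefix)
  ultimately obtain y where y: "y \<in> C \<inter> cylinder T (map d [0..<m])" "y \<notin> S closure_of F"
    using interior_of_maximal[OF _ open_S[OF d]] by blast
  then obtain W where "y \<in> W" "openin S W" "W \<inter> F = {}"
    using topS unfolding in_closure_of by blast
  then obtain V where V: "openin (branch_topology T) V" "W = V \<inter> C" "y \<in> V"
    unfolding S_def openin_subtopology by blast
  then obtain n where n: "\<forall>z\<in>branches T. (\<forall>i<n. z i = y i) \<longrightarrow> z \<in> V"
    using openin_branch_topology_prefix_nbhd by metis
  define L where "L = max n m"
  have L: "n \<le> L" "m \<le> L" by (simp_all add: L_def)
  have "y \<in> S closure_of D"
    using D y topS by (simp add: dense_in_def)
  moreover have "y \<in> C \<inter> cylinder T (map y [0..<L])"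
    using y by (auto simp: cylinder_prefix)
  moreover have "openin S (C \<inter> cylinder T (map y [0..<L]))"
    using open_S y by blast
  ultimately obtain d' where "d' \<in> D" "d' \<in> cylinder T (map y [0..<L])"
    unfolding in_closure_of by blast
  then have d': "d' \<in> D" "\<forall>i<L. d' i = y i"
    by (auto simp: cylinder_prefix)
  have "z \<notin> F" if "z \<in> C" "\<forall>i<L. z i = d' i" for z
  proof -
    have "z \<in> branches T" using that(1) C by blast
    moreover have "\<forall>i<n. z i = y i" using that(2) d'(2) L(1) by auto
    ultimately have "z \<in> V" using n by blast
    then show ?thesis using that(1) \<open>W = V \<inter> C\<close> \<open>W \<inter> F = {}\<close> by blast
  qed
  moreover have "\<forall>i<m. d' i = d i"
    using d'(2) y(1) L(2) unfolding cylinder_prefix by auto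
  ultimately show ?thesis
    using d'(1) L(2) by blast
qed

lemma limsup_le_if_eventually_le:
  "(\<And>n. n \<ge> N \<Longrightarrow> v n \<le> c) \<Longrightarrow> limsup (\<lambda>n. ereal (v n)) \<le> ereal c"
  by (rule Limsup_bounded) (auto simp: eventually_sequentially)

lemma ge_limsup_if_frequently_close:
  assumes "\<And>e N. e > 0 \<Longrightarrow> \<exists>n\<ge>N. c - e < v n"
  shows "ereal c \<le> limsup (\<lambda>n. ereal (v n))"
  unfolding limsup_INF_SUP
proof (rule INF_greatest)
  fix N :: nat
  show "ereal c \<le> (SUP n\<in>{N..}. ereal (v n))"
  proof (rule ereal_le_epsilon2)
    fix e :: real assume "e > 0"
    then obtain n where "n \<ge> N" "c - e < v n" using assms by blast
    then have "ereal (c - e) \<le> (SUP n\<in>{N..}. ereal (v n))"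
      by (intro SUP_upper2[of n]) auto
    then have "ereal (c - e) + ereal e \<le> (SUP n\<in>{N..}. ereal (v n)) + ereal e"
      by (rule add_right_mono)
    then show "ereal c \<le> (SUP n\<in>{N..}. ereal (v n)) + ereal e"
      by simp
  qed
qed

text \<open>The state of the switching strategy after \<open>n\<close> moves is \<open>(k, d, L)\<close>: \<open>k\<close> switches
  have happened, \<open>d\<close> is the current target and its first \<open>L\<close> coordinates are locked.
  \<open>E k d m\<close> is the new target together with its locked length; it must keep the first \<open>m\<close>
  coordinates, which covers both the moves already played and the locked prefix.\<close>

primrec switch_state ::
  "(nat \<Rightarrow> (nat \<Rightarrow> 'a) \<Rightarrow> nat \<Rightarrow> (nat \<Rightarrow> 'a) \<times> nat) \<Rightarrow> (nat \<Rightarrow> 'a) \<Rightarrow> real \<Rightarrow>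
    (nat \<Rightarrow> real) \<Rightarrow> nat \<Rightarrow> nat \<times> (nat \<Rightarrow> 'a) \<times> nat"
where
  "switch_state E d0 r v 0 = (0, d0, 0)"
| "switch_state E d0 r v (Suc n) =
    (case switch_state E d0 r v n of (k, d, L) \<Rightarrow>
      if r - 1 / (real k + 1) < v n then (Suc k, E k d (max (Suc n) L)) else (k, d, L))"

lemma switch_state_cong:
  "(\<And>i. i < n \<Longrightarrow> v i = w i) \<Longrightarrow> switch_state E d0 r v n = switch_state E d0 r w n"
  by (induction n) auto

locale switching_strategy =
  fixes E :: "nat \<Rightarrow> (nat \<Rightarrow> 'a) \<Rightarrow> nat \<Rightarrow> (nat \<Rightarrow> 'a) \<times> nat"
    and d0 :: "nat \<Rightarrow> 'a" and r :: real and G :: "(nat \<Rightarrow> 'a) set"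
  assumes start_in_G: "d0 \<in> G"
    and switch_in_G: "d \<in> G \<Longrightarrow> fst (E k d m) \<in> G"
    and switch_locks: "d \<in> G \<Longrightarrow> m \<le> snd (E k d m)"
    and switch_extends: "d \<in> G \<Longrightarrow> i < m \<Longrightarrow> fst (E k d m) i = d i"
begin

definition switches :: "(nat \<Rightarrow> real) \<Rightarrow> nat \<Rightarrow> nat" where
  "switches v n = fst (switch_state E d0 r v n)"

definition target :: "(nat \<Rightarrow> real) \<Rightarrow> nat \<Rightarrow> nat \<Rightarrow> 'a" where
  "target v n = fst (snd (switch_state E d0 r v n))"

definition locked :: "(nat \<Rightarrow> real) \<Rightarrow> nat \<Rightarrow> nat" where
  "locked v n = snd (snd (switch_state E d0 r v n))"

definition triggers :: "(nat \<Rightarrow> real) \<Rightarrow> nat \<Rightarrow> bool" where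
  "triggers v n \<longleftrightarrow> r - 1 / (real (switches v n) + 1) < v n"

definition outcome :: "(nat \<Rightarrow> real) \<Rightarrow> nat \<Rightarrow> 'a" where
  "outcome v i = target v i i"

text \<open>Player I's own past moves are determined by the bids, so the strategy reads only the
  bids; the junk values of \<open>vs ! i\<close> for \<open>i \<ge> length vs\<close> are never consulted.\<close>

definition strategy :: "'a list \<Rightarrow> real list \<Rightarrow> 'a" where
  "strategy xs vs = target (\<lambda>i. vs ! i) (length vs) (length vs)"

lemma switches_0: "switches v 0 = 0"
  by (simp add: switches_def)

lemma state_Suc_triggers:
  assumes "triggers v n"
  shows "switches v (Suc n) = Suc (switches v n)"
    and "(target v (Suc n), locked v (Suc n)) =
      E (switches v n) (target v n) (max (Suc n) (locked v n))"
  using assms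
  by (auto simp: switches_def target_def locked_def triggers_def split: prod.splits)

lemma state_Suc_not_triggers:
  assumes "\<not> triggers v n"
  shows "switches v (Suc n) = switches v n" "target v (Suc n) = target v n"
    "locked v (Suc n) = locked v n"
  using assms
  by (auto simp: switches_def target_def locked_def triggers_def split: prod.splits)

lemma target_in_G: "target v n \<in> G"
proof (induction n)
  case 0
  then show ?case using start_in_G by (simp add: target_def)
next
  case (Suc n)
  then show ?case
    using state_Suc_triggers(2)[of v n] state_Suc_not_triggers(2)[of v n] switch_in_G
    by (cases "triggers v n") (auto simp: prod_eq_iff)
qed

lemma switches_Suc: "switches v (Suc n) = switches v n \<or> switches v (Suc n) = Suc (switches v n)"
  using state_Suc_triggers(1) state_Suc_not_triggers(1) by blast

lemma switches_mono: "n \<le> m \<Longrightarrow> switches v n \<le> switches v m"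
  using switches_Suc by (metis le_SucI order_refl lift_Suc_mono_le)

lemma locked_Suc: "locked v n \<le> locked v (Suc n)"
proof (cases "triggers v n")
  case True
  then show ?thesis
    using state_Suc_triggers(2)[OF True] switch_locks[OF target_in_G]
    by (metis max.bounded_iff snd_conv)
qed (simp add: state_Suc_not_triggers)

lemma locked_mono: "n \<le> m \<Longrightarrow> locked v n \<le> locked v m"
  using locked_Suc by (rule lift_Suc_mono_le)

lemma target_Suc_agrees:
  assumes "i < max (Suc n) (locked v n)"
  shows "target v (Suc n) i = target v n i"
proof (cases "triggers v n")
  case True
  then show ?thesis
    using state_Suc_triggers(2)[OF True] switch_extends[OF target_in_G assms] by (metis fst_conv)
qed (simp add: state_Suc_not_triggers)

lemma target_agrees:
  assumes "n \<le> m" "i < max n (locked v n)"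
  shows "target v m i = target v n i"
  using assms(1)
proof (induction m rule: dec_induct)
  case (step m)
  have "i < max (Suc m) (locked v m)"
    using assms(2) step.hyps(1) locked_mono[OF step.hyps(1), of v]
    unfolding less_max_iff_disj by linarith
  then show ?case using target_Suc_agrees step.IH by simp
qed simp

lemma outcome_agrees:
  assumes "i < max n (locked v n)"
  shows "outcome v i = target v n i"
proof -
  have "target v (Suc i) i = target v i i"
    by (rule target_Suc_agrees) simp
  moreover have "target v (Suc i) i = target v n i"
  proof (cases "Suc i \<le> n")
    case True
    then show ?thesis using target_agrees[of "Suc i" n i v] by simp
  next
    case False
    then show ?thesis using target_agrees[of n "Suc i" i v] assms by simp
  qed
  ultimately show ?thesis by (simp add: outcome_def)
qed

lemma playI_strategy: "playI strategy v n = map (outcome v) [0..<n]"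
proof (induction n)
  case (Suc n)
  have "switch_state E d0 r (\<lambda>i. map v [0..<n] ! i) n = switch_state E d0 r v n"
    by (rule switch_state_cong) simp
  then have "strategy (playI strategy v n) (map v [0..<n]) = outcome v n"
    by (simp add: strategy_def target_def outcome_def)
  with Suc show ?case by simp
qed simp

lemma runI_strategy: "runI strategy v = outcome v"
  unfolding runI_def playI_strategy by (rule ext) (simp add: nth_append)

lemma playI_strategy_in_tree:
  assumes "G \<subseteq> branches T"
  shows "playI strategy v n \<in> T"
proof -
  have "playI strategy v n = map (target v n) [0..<n]"
    by (simp add: playI_strategy outcome_agrees)
  then show ?thesis
    using assms target_in_G branch_prefix_in_tree by fastforce
qed

lemma outcome_in_closure_of:
  assumes "G \<subseteq> C" "C \<subseteq> branches T"
  shows "outcome v \<in> branch_topology T closure_of C"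
proof (rule in_closure_of_branch_topology)
  show "outcome v \<in> branches T"
    using playI_strategy_in_tree[of T v] assms by (simp add: branches_def playI_strategy)
  show "\<exists>y\<in>C. \<forall>i<n. y i = outcome v i" for n
    using assms(1) target_in_G outcome_agrees by (metis less_max_iff_disj subsetD)
qed fact

lemma outcome_if_finitely_many_switches:
  assumes "bdd_above (range (switches v))"
  shows "outcome v \<in> G" and "limsup (\<lambda>n. ereal (v n)) < ereal r"
proof -
  define M where "M = Max (range (switches v))"
  have fin: "finite (range (switches v))"
    using assms bdd_above_nat by blast
  then have "M \<in> range (switches v)"
    unfolding M_def by (intro Max_in) auto
  then obtain N where N: "switches v N = M" by blast
  have switches_eq: "switches v n = M" if "n \<ge> N" for n
  proof -
    have "switches v n \<le> M" unfolding M_def using fin by (intro Max_ge) auto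
    then show ?thesis using switches_mono[OF that, of v] N by linarith
  qed
  have quiet: "\<not> triggers v n" if "n \<ge> N" for n
  proof
    assume "triggers v n"
    then have "switches v (Suc n) = Suc M"
      using state_Suc_triggers(1) switches_eq[OF that] by simp
    then show False using switches_eq[of "Suc n"] that by simp
  qed
  have target_eq: "target v n = target v N" if "n \<ge> N" for n
    using that
  proof (induction n rule: dec_induct)
    case (step n)
    then show ?case using quiet state_Suc_not_triggers(2) by simp
  qed simp
  have "outcome v = target v N"
  proof
    fix i
    show "outcome v i = target v N i"
    proof (cases "i < N")
      case True
      then show ?thesis by (simp add: outcome_agrees)
    next
      case False
      then show ?thesis using target_eq[of i] by (simp add: outcome_def)
    qed
  qed
  then show "outcome v \<in> G" using target_in_G by simp
  have "v n \<le> r - 1 / (real M + 1)" if "n \<ge> N" for n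
    using quiet[OF that] switches_eq[OF that] by (simp add: triggers_def)
  then have "limsup (\<lambda>n. ereal (v n)) \<le> ereal (r - 1 / (real M + 1))"
    by (rule limsup_le_if_eventually_le)
  also have "\<dots> < ereal r" by simp
  finally show "limsup (\<lambda>n. ereal (v n)) < ereal r" .
qed

lemma switch_occurs:
  assumes "\<not> bdd_above (range (switches v))"
  shows "\<exists>n. switches v n = j \<and> triggers v n"
proof -
  have "\<not> (\<forall>m. switches v m \<le> j)"
    using assms by (auto intro: bdd_above.I2)
  then obtain m where m: "j < switches v m"
    by (auto simp: not_le)
  define n where "n = (LEAST m. j < switches v m) - 1"
  have least: "j < switches v (LEAST m. j < switches v m)"
    using m by (rule LeastI)
  then have "(LEAST m. j < switches v m) = Suc n"
    unfolding n_def using switches_0[of v] by (cases "LEAST m. j < switches v m") auto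
  then have "j < switches v (Suc n)" "\<not> j < switches v n"
    using least not_less_Least[of n "\<lambda>m. j < switches v m"] by auto
  then show ?thesis
    using switches_Suc[of v n] state_Suc_not_triggers(1)[of v n] by (intro exI[of _ n]) auto
qed

lemma limsup_if_infinitely_many_switches:
  assumes "\<not> bdd_above (range (switches v))"
  shows "ereal r \<le> limsup (\<lambda>n. ereal (v n))"
proof (rule ge_limsup_if_frequently_close)
  fix e :: real and N :: nat
  assume "e > 0"
  then obtain K :: nat where K: "1 / (real K + 1) < e"
    by (metis nat_approx_posE of_nat_Suc add.commute)
  obtain n where n: "switches v n = max K (switches v N)" "triggers v n"
    using switch_occurs[OF assms] by blast
  have "N \<le> n"
  proof (rule ccontr)
    assume "\<not> N \<le> n"
    then have "switches v (Suc n) \<le> switches v N" by (intro switches_mono) simp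
    then show False using n state_Suc_triggers(1)[of v n] by simp
  qed
  moreover have "1 / (real (switches v n) + 1) \<le> 1 / (real K + 1)"
    using n(1) by (intro divide_left_mono) auto
  ultimately show "\<exists>n\<ge>N. r - e < v n"
    using n(2) K unfolding triggers_def by (intro exI[of _ n]) auto
qed


lemma outcome_avoids_if_infinitely_many_switches:
  assumes "\<not> bdd_above (range (switches v))" and "outcome v \<in> C"
    and avoids: "\<And>k d m z. d \<in> G \<Longrightarrow> z \<in> C \<Longrightarrow>
      (\<forall>i<snd (E k d m). z i = fst (E k d m) i) \<Longrightarrow> z \<notin> F k"
  shows "outcome v \<notin> F j"
proof -
  obtain n where n: "switches v n = j" "triggers v n"
    using switch_occurs[OF assms(1)] by blast
  have "\<forall>i<locked v (Suc n). outcome v i = target v (Suc n) i"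
    using outcome_agrees by auto
  then show ?thesis
    using avoids[OF target_in_G[of v n] assms(2), of j "max (Suc n) (locked v n)"]
      state_Suc_triggers(2)[OF n(2)] n(1) by (metis fst_conv snd_conv)
qed

end

lemma avoiding_switch_exists:
  fixes T :: "'a list set" and C :: "(nat \<Rightarrow> 'a) set" and F :: "nat \<Rightarrow> (nat \<Rightarrow> 'a) set"
  defines "S \<equiv> subtopology (branch_topology T) C"
  assumes C: "C \<subseteq> branches T" and F: "\<And>k. nowhere_dense_in S (F k)" and D: "dense_in S D"
  obtains E :: "nat \<Rightarrow> (nat \<Rightarrow> 'a) \<Rightarrow> nat \<Rightarrow> (nat \<Rightarrow> 'a) \<times> nat"
  where "\<And>k d m. d \<in> C \<Longrightarrow> fst (E k d m) \<in> D" "\<And>k d m. d \<in> C \<Longrightarrow> m \<le> snd (E k d m)"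
    "\<And>k d m i. d \<in> C \<Longrightarrow> i < m \<Longrightarrow> fst (E k d m) i = d i"
    "\<And>k d m z. d \<in> C \<Longrightarrow> z \<in> C \<Longrightarrow> (\<forall>i<snd (E k d m). z i = fst (E k d m) i) \<Longrightarrow> z \<notin> F k"
proof -
  define avoids where "avoids k d m p \<longleftrightarrow> fst p \<in> D \<and> m \<le> snd p \<and>
    (\<forall>i<m. fst p i = d i) \<and> (\<forall>z\<in>C. (\<forall>i<snd p. z i = fst p i) \<longrightarrow> z \<notin> F k)"
    for k d m and p :: "(nat \<Rightarrow> 'a) \<times> nat"
  have "\<exists>p. avoids k d m p" if "d \<in> C" for k d m
    using dense_extension_avoiding_nowhere_dense[OF C F[of k, unfolded S_def] D[unfolded S_def] that]
    by (simp add: avoids_def)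
  then have E: "avoids k d m (SOME p. avoids k d m p)" if "d \<in> C" for k d m
    using that by (blast intro: someI_ex)
  let ?E = "\<lambda>k d m. SOME p. avoids k d m p"
  show ?thesis
  proof (rule that[of ?E])
    show "fst (?E k d m) \<in> D" "m \<le> snd (?E k d m)" if "d \<in> C" for k d m
      using E[OF that] by (simp_all add: avoids_def)
    show "fst (?E k d m) i = d i" if "d \<in> C" "i < m" for k d m i
      using E[OF that(1)] that(2) by (simp add: avoids_def)
    show "z \<notin> F k" if "d \<in> C" "z \<in> C" "\<forall>i<snd (?E k d m). z i = fst (?E k d m) i" for k d m z
      using E[OF that(1)] that(2,3) by (simp add: avoids_def)
  qed
qed

lemma winning_strategy_I_if_meagre_dense:
  fixes T :: "'a list set" and C :: "(nat \<Rightarrow> 'a) set" and f :: "(nat \<Rightarrow> 'a) \<Rightarrow> real"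
    and r :: real
  defines "S \<equiv> subtopology (branch_topology T) C"
    and "D \<equiv> C \<inter> {x \<in> branches T. f x \<ge> r}"
  assumes closed: "closedin (branch_topology T) C" and "C \<noteq> {}"
    and "meagre_in S D" and dense: "dense_in S D"
  shows "\<exists>\<sigma>. winning_strategy_I T f \<sigma>"
proof -
  have C: "C \<subseteq> branches T"
    using closedin_subset[OF closed] by (simp add: topspace_branch_topology)
  have D: "D \<subseteq> C"
    by (simp add: D_def)
  obtain F :: "nat \<Rightarrow> (nat \<Rightarrow> 'a) set"
    where F: "\<And>k. nowhere_dense_in S (F k)" and D_F: "D \<subseteq> (\<Union>k. F k)"
    using \<open>meagre_in S D\<close> unfolding meagre_in_def by blast
  obtain E where E: "\<And>k d m. d \<in> C \<Longrightarrow> fst (E k d m) \<in> D" "\<And>k d m. d \<in> C \<Longrightarrow> m \<le> snd (E k d m)"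
    "\<And>k d m i. d \<in> C \<Longrightarrow> i < m \<Longrightarrow> fst (E k d m) i = d i"
    "\<And>k d m z. d \<in> C \<Longrightarrow> z \<in> C \<Longrightarrow> (\<forall>i<snd (E k d m). z i = fst (E k d m) i) \<Longrightarrow> z \<notin> F k"
    by (fact avoiding_switch_exists[where F = F, OF C F[unfolded S_def] dense[unfolded S_def]])
  have E_avoids: "z \<notin> F k"
    if "d \<in> D" "z \<in> C" "\<forall>i<snd (E k d m). z i = fst (E k d m) i" for k d m z
    using E(4)[OF _ that(2,3)] that(1) D by blast
  have "S closure_of D = C"
    using dense C unfolding dense_in_def S_def by (simp add: topspace_branch_topology Int_absorb1)
  then have "D \<noteq> {}"
    using \<open>C \<noteq> {}\<close> by auto
  then obtain d0 where "d0 \<in> D" by blast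
  interpret switching_strategy E d0 r D
  proof
    show "d0 \<in> D" by fact
  next
    fix k d m i assume "d \<in> D"
    then have "d \<in> C" using D by blast
    then show "fst (E k d m) \<in> D" "m \<le> snd (E k d m)" "i < m \<Longrightarrow> fst (E k d m) i = d i"
      by (simp_all add: E(1-3))
  qed
  have "winning_strategy_I T f strategy"
    unfolding winning_strategy_I_def runI_strategy
  proof (intro allI conjI)
    fix v :: "nat \<Rightarrow> real"
    show "playI strategy v n \<in> T" for n
      using C D by (intro playI_strategy_in_tree) auto
    show "ereal (f (outcome v)) \<noteq> limsup (\<lambda>n. ereal (v n))"
    proof (cases "bdd_above (range (switches v))")
      case True
      then have "ereal r \<le> ereal (f (outcome v))"
        using outcome_if_finitely_many_switches(1) by (simp add: D_def)
      with outcome_if_finitely_many_switches(2)[OF True]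
      have "limsup (\<lambda>n. ereal (v n)) < ereal (f (outcome v))" by (rule less_le_trans)
      then show ?thesis by simp
    next
      case False
      have "outcome v \<in> C"
        using outcome_in_closure_of[OF D C] closure_of_closedin[OF closed] by simp
      moreover have "outcome v \<notin> F j" for j
        using outcome_avoids_if_infinitely_many_switches[OF False \<open>outcome v \<in> C\<close> E_avoids] .
      ultimately have "outcome v \<notin> D"
        using D_F by blast
      then have "f (outcome v) < r"
        using \<open>outcome v \<in> C\<close> C by (auto simp: D_def)
      then have "ereal (f (outcome v)) < ereal r" by simp
      also have "\<dots> \<le> limsup (\<lambda>n. ereal (v n))"
        by (rule limsup_if_infinitely_many_switches[OF False])
      finally show ?thesis by simp
    qed
  qed
  then show ?thesis by blast
qed

theorem mainTheorem8:
  fixes A :: "'a set" and T :: "'a list set" and f :: "(nat \<Rightarrow> 'a) \<Rightarrow> real"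
    and r :: real and C :: "(nat \<Rightarrow> 'a) set"
  assumes "A \<noteq> {}" and "countable A"
    and "is_tree_on A T" and "pruned T"
    and "is_cantor_set (branch_topology T) C"
    and "meagre_in (subtopology (branch_topology T) C) (C \<inter> {x \<in> branches T. f x \<ge> r})"
    and "dense_in (subtopology (branch_topology T) C) (C \<inter> {x \<in> branches T. f x \<ge> r})"
  shows "\<exists>\<sigma>. winning_strategy_I T f \<sigma>"
  using cantor_set_closedin_branch_topology[OF assms(5)] cantor_set_nonempty[OF assms(5)] assms(6,7)
  by (rule winning_strategy_I_if_meagre_dense)

end
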